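(* Let $K\ge 2$, $T\ge 1$, and let $\mathbf{x}(t)\in[0,1]^K$, $t=1,\dots,T$, be any fixed sequence of reward vectors. Run the algorithm REX3 described in the context with transfer function $\psi$ equal to the identity and parameter $\gamma\in(0,\tfrac12)$. Provided that $\mathbb{E}\mathbb{G}_{alg}\le\mathbb{G}_{max}$ and $\mathbb{E}\mathbb{G}_{unif}\ge\mathbb{G}_{min}$, $$\mathbb{G}_{max}-\mathbb{E}\mathbb{G}_{alg}\le\frac{K\ln K}{\gamma}+\gamma\big(e\,\mathbb{G}_{max}-(4-e)\,\mathbb{G}_{min}\big).$$
   Context: Adversarial utility-based dueling bandit setting: there are $K$ arms; before play, an (oblivious) environment fixes a horizon $T$ and reward vectors $\mathbf{x}(t)=(x_1(t),\dots,x_K(t))\in[0,1]^K$ for $t=1,\dots,T$. At each round the learner selects a pair of arms $(a_t,b_t)$ and observes only the relative feedback $\psi(x_{a_t}(t)-x_{b_t}(t))$, here with $\psi(z)=z$. Algorithm REX3 with parameter $\gamma$: initialize $w_i(1)=1$ for all $i$. At each round $t$: set $p_i(t)=(1-\gamma)\frac{w_i(t)}{\sum_{j=1}^K w_j(t)}+\frac{\gamma}{K}$; draw two arms $a_t,b_t$ independently according to $\mathbf{p}(t)=(p_1(t),\dots,p_K(t))$; receive $\psi(x_{a_t}(t)-x_{b_t}(t))$; if $a_t\neq b_t$, set $w_{a_t}(t+1)=w_{a_t}(t)\exp\!\big(\frac{\gamma}{K}\frac{\psi(x_{a_t}-x_{b_t})}{2p_{a_t}(t)}\big)$ and $w_{b_t}(t+1)=w_{b_t}(t)\exp\!\big(-\frac{\gamma}{K}\frac{\psi(x_{a_t}-x_{b_t})}{2p_{b_t}(t)}\big)$;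 other weights unchanged. Notation: $\mathbb{G}_{max}=\max_i\sum_{t=1}^T x_i(t)$; $\mathbb{G}_{min}=\min_i\sum_{t=1}^T x_i(t)$; $\mathbb{G}_{alg}=\frac12\sum_{t=1}^T\big(x_{a_t}(t)+x_{b_t}(t)\big)$; $\mathbb{E}\mathbb{G}_{unif}=\frac1K\sum_{t=1}^T\sum_{i=1}^K x_i(t)$. Expectations are over the algorithm's internal randomization. *)

theory Defs
  imports "HOL-Probability.Probability"
begin

text \<open>Arms are 0,...,K-1; rounds are 1,...,T; reward of arm i at round t is x t i.
  Weights are functions nat => real (only indices below K matter).\<close>

definition rex3_prob :: "real \<Rightarrow> nat \<Rightarrow> (nat \<Rightarrow> real) \<Rightarrow> nat \<Rightarrow> real" where
  "rex3_prob \<gamma> K w i = (1 - \<gamma>) * w i / (\<Sum>j<K. w j) + \<gamma> / real K"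

definition rex3_arm :: "real \<Rightarrow> nat \<Rightarrow> (nat \<Rightarrow> real) \<Rightarrow> nat pmf" where
  "rex3_arm \<gamma> K w = embed_pmf (\<lambda>i. if i < K then rex3_prob \<gamma> K w i else 0)"

definition rex3_update ::
  "(real \<Rightarrow> real) \<Rightarrow> real \<Rightarrow> nat \<Rightarrow> (nat \<Rightarrow> nat \<Rightarrow> real) \<Rightarrow> nat \<Rightarrow> (nat \<Rightarrow> real)
     \<Rightarrow> nat \<Rightarrow> nat \<Rightarrow> (nat \<Rightarrow> real)" where
  "rex3_update \<psi> \<gamma> K x t w a b =
     (if a = b then w
      else (let fb = \<psi> (x t a - x t b) in
            w(a := w a * exp (\<gamma> / real K * fb / (2 * rex3_prob \<gamma> K w a)),
              b := w b * exp (- (\<gamma> / real K * fb / (2 * rex3_prob \<gamma> K w b))))))"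

text \<open>Joint distribution, after t rounds, of (weights w(t+1), cumulative gain of the
  algorithm  sum_{s<=t} (x_{a_s}(s) + x_{b_s}(s))/2).\<close>
fun rex3_run ::
  "(real \<Rightarrow> real) \<Rightarrow> real \<Rightarrow> nat \<Rightarrow> (nat \<Rightarrow> nat \<Rightarrow> real) \<Rightarrow> nat \<Rightarrow> ((nat \<Rightarrow> real) \<times> real) pmf" where
  "rex3_run \<psi> \<gamma> K x 0 = return_pmf (\<lambda>_. 1, 0)"
| "rex3_run \<psi> \<gamma> K x (Suc t) =
     bind_pmf (rex3_run \<psi> \<gamma> K x t) (\<lambda>(w, g).
     bind_pmf (rex3_arm \<gamma> K w) (\<lambda>a.
     bind_pmf (rex3_arm \<gamma> K w) (\<lambda>b.
     return_pmf (rex3_update \<psi> \<gamma> K x (Suc t) w a b,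
                 g + (x (Suc t) a + x (Suc t) b) / 2))))"

definition EG_alg :: "(real \<Rightarrow> real) \<Rightarrow> real \<Rightarrow> nat \<Rightarrow> (nat \<Rightarrow> nat \<Rightarrow> real) \<Rightarrow> nat \<Rightarrow> real" where
  "EG_alg \<psi> \<gamma> K x T = measure_pmf.expectation (rex3_run \<psi> \<gamma> K x T) snd"

definition G_max :: "nat \<Rightarrow> (nat \<Rightarrow> nat \<Rightarrow> real) \<Rightarrow> nat \<Rightarrow> real" where
  "G_max K x T = Max ((\<lambda>i. \<Sum>t=1..T. x t i) ` {..<K})"

definition G_min :: "nat \<Rightarrow> (nat \<Rightarrow> nat \<Rightarrow> real) \<Rightarrow> nat \<Rightarrow> real" where
  "G_min K x T = Min ((\<lambda>i. \<Sum>t=1..T. x t i) ` {..<K})"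

definition EG_unif :: "nat \<Rightarrow> (nat \<Rightarrow> nat \<Rightarrow> real) \<Rightarrow> nat \<Rightarrow> real" where
  "EG_unif K x T = (1 / real K) * (\<Sum>t=1..T. \<Sum>i<K. x t i)"

end

theory Submission
  imports Defs
begin

text \<open>
  Fix an arm j and follow the potential ln (\<Sum>i. w i) - ln (w j) - c G, where G is the gain
  collected by the algorithm and c = \<gamma>/K + 3\<gamma>^2/(2K(1-\<gamma>)). The update multiplies w i by
  exp (\<gamma>/K \<cdot> e_i), where e_i is an unbiased estimate of x_i(t) - m(t), m(t) being the
  p-weighted mean reward, and p_i E[e_i^2] \<le> (x_i(t) + m(t))/2. Using exp z \<le> 1 + z + z^2 and
  ln u \<le> u - 1, each round lowers the expected potential by at least
  \<gamma>/K x_j(t) + \<gamma>^2/(2K^2(1-\<gamma>)) \<Sum>i x_i(t). The potential starts at ln K and never drops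
  below -c G, which yields a regret bound in terms of the gains of the algorithm and of the
  uniform strategy; the two side conditions and e \<ge> 5/2 turn it into the stated form.
\<close>

lemma exp_le_one_plus_add_square:
  fixes z :: real
  assumes "z \<le> 1"
  shows "exp z \<le> 1 + z + z\<^sup>2"
proof (cases "0 \<le> z")
  case True
  then show ?thesis using exp_bound assms by auto
next
  case False
  define y where "y = - z"
  have "0 < y" using False by (simp add: y_def)
  have "1 - y + y\<^sup>2 = (y - 1/2)\<^sup>2 + 3/4"
    by (simp add: power2_eq_square algebra_simps)
  then have nonneg: "0 \<le> 1 - y + y\<^sup>2" by simp
  have "1 \<le> (1 - y + y\<^sup>2) * (1 + y)"
    using \<open>0 < y\<close> by (simp add: algebra_simps power2_eq_square)
  also have "\<dots> \<le> (1 - y + y\<^sup>2) * exp y"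
    using nonneg by (intro mult_left_mono) simp_all
  finally have "exp (- y) \<le> 1 - y + y\<^sup>2"
    by (simp add: exp_minus field_simps)
  then show ?thesis by (simp add: y_def)
qed

lemma square_diff_le_add:
  fixes u v :: real
  assumes "0 \<le> u" "u \<le> 1" "0 \<le> v" "v \<le> 1"
  shows "(u - v)\<^sup>2 \<le> u + v"
proof -
  have "(u - v)\<^sup>2 = \<bar>u - v\<bar> * \<bar>u - v\<bar>" by (simp add: power2_eq_square)
  also have "\<dots> \<le> \<bar>u - v\<bar>" using assms by (intro mult_left_le) auto
  also have "\<dots> \<le> u + v" using assms by auto
  finally show ?thesis .
qed

lemma ln_sum_mult_exp_le:
  fixes w z :: "'a \<Rightarrow> real"
  assumes "finite A" "A \<noteq> {}"
    and w: "\<And>i. i \<in> A \<Longrightarrow> 0 < w i" and z: "\<And>i. i \<in> A \<Longrightarrow> z i \<le> 1"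
  shows "ln (\<Sum>i\<in>A. w i * exp (z i))
           \<le> ln (\<Sum>i\<in>A. w i) + (\<Sum>i\<in>A. w i * (z i + (z i)\<^sup>2)) / (\<Sum>i\<in>A. w i)"
proof -
  define S where "S = (\<Sum>i\<in>A. w i)"
  define S' where "S' = (\<Sum>i\<in>A. w i * exp (z i))"
  have "0 < S" unfolding S_def using assms by (intro sum_pos) auto
  have "0 < S'" unfolding S'_def using assms by (intro sum_pos) auto
  have "S' \<le> (\<Sum>i\<in>A. w i * (1 + z i + (z i)\<^sup>2))"
    unfolding S'_def using w z exp_le_one_plus_add_square
    by (intro sum_mono mult_left_mono) (auto intro: less_imp_le)
  also have "\<dots> = S + (\<Sum>i\<in>A. w i * (z i + (z i)\<^sup>2))"
    by (simp add: S_def sum.distrib algebra_simps)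
  finally have S'_le: "S' - S \<le> (\<Sum>i\<in>A. w i * (z i + (z i)\<^sup>2))" by simp
  have "ln S' - ln S = ln (S' / S)"
    using \<open>0 < S\<close> \<open>0 < S'\<close> by (simp add: ln_div)
  also have "\<dots> \<le> S' / S - 1"
    using \<open>0 < S\<close> \<open>0 < S'\<close> by (intro ln_le_minus_one) simp
  also have "\<dots> = (S' - S) / S" using \<open>0 < S\<close> by (simp add: field_simps)
  also have "\<dots> \<le> (\<Sum>i\<in>A. w i * (z i + (z i)\<^sup>2)) / S"
    using S'_le \<open>0 < S\<close> by (intro divide_right_mono) auto
  finally show ?thesis unfolding S_def S'_def by simp
qed

lemma expectation_bind_pmf_le:
  fixes M :: "'a pmf" and N :: "'a \<Rightarrow> 'b pmf" and f :: "'b \<Rightarrow> real"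
  assumes "finite (set_pmf M)" "\<And>s. s \<in> set_pmf M \<Longrightarrow> finite (set_pmf (N s))"
    and le: "\<And>s. s \<in> set_pmf M \<Longrightarrow> measure_pmf.expectation (N s) f \<le> g s"
  shows "measure_pmf.expectation (bind_pmf M N) f \<le> measure_pmf.expectation M g"
proof -
  have "measure_pmf.expectation (bind_pmf M N) f
      = (\<Sum>s\<in>set_pmf M. pmf M s *\<^sub>R measure_pmf.expectation (N s) f)"
    by (rule pmf_expectation_bind) (use assms in auto)
  also have "\<dots> \<le> (\<Sum>s\<in>set_pmf M. g s * pmf M s)"
    using mult_left_mono[OF le pmf_nonneg] by (intro sum_mono) (simp add: mult.commute)
  also have "\<dots> = measure_pmf.expectation M g"
    by (rule integral_measure_pmf_real[symmetric]) (use assms in auto)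
  finally show ?thesis .
qed

definition pair_expectation :: "nat \<Rightarrow> (nat \<Rightarrow> real) \<Rightarrow> (nat \<Rightarrow> nat \<Rightarrow> real) \<Rightarrow> real" where
  "pair_expectation K p f = (\<Sum>a<K. \<Sum>b<K. p a * p b * f a b)"

lemma pair_expectation_add:
  "pair_expectation K p (\<lambda>a b. f a b + g a b) = pair_expectation K p f + pair_expectation K p g"
  by (simp add: pair_expectation_def algebra_simps sum.distrib)

lemma pair_expectation_diff:
  "pair_expectation K p (\<lambda>a b. f a b - g a b) = pair_expectation K p f - pair_expectation K p g"
  by (simp add: pair_expectation_def algebra_simps sum_subtractf)

lemma pair_expectation_cmult:
  "pair_expectation K p (\<lambda>a b. c * f a b) = c * pair_expectation K p f"
  by (simp add: pair_expectation_def sum_distrib_left ac_simps)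

lemma pair_expectation_sum:
  "pair_expectation K p (\<lambda>a b. \<Sum>i\<in>I. f i a b) = (\<Sum>i\<in>I. pair_expectation K p (f i))"
proof -
  have "pair_expectation K p (\<lambda>a b. \<Sum>i\<in>I. f i a b)
      = (\<Sum>a<K. \<Sum>b<K. \<Sum>i\<in>I. p a * p b * f i a b)"
    unfolding pair_expectation_def by (simp add: sum_distrib_left)
  also have "\<dots> = (\<Sum>a<K. \<Sum>i\<in>I. \<Sum>b<K. p a * p b * f i a b)"
    by (intro sum.cong refl sum.swap)
  also have "\<dots> = (\<Sum>i\<in>I. \<Sum>a<K. \<Sum>b<K. p a * p b * f i a b)"
    by (rule sum.swap)
  finally show ?thesis unfolding pair_expectation_def .
qed

definition gain_estimate :: "(nat \<Rightarrow> real) \<Rightarrow> (nat \<Rightarrow> real) \<Rightarrow> nat \<Rightarrow> nat \<Rightarrow> nat \<Rightarrow> real" where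
  "gain_estimate p y a b i =
     (if i = a then (y a - y b) / (2 * p a) else 0) - (if i = b then (y a - y b) / (2 * p b) else 0)"

lemma gain_estimate_eq_if:
  "gain_estimate p y a b i
     = (if a = i then (y i - y b) / (2 * p i) else 0) - (if b = i then (y a - y i) / (2 * p i) else 0)"
  by (auto simp: gain_estimate_def)

lemma gain_estimate_sq_eq_if:
  "(gain_estimate p y a b i)\<^sup>2
     = (if a = i then ((y i - y b) / (2 * p i))\<^sup>2 else 0)
       + (if b = i then ((y a - y i) / (2 * p i))\<^sup>2 else 0)"
  by (auto simp: gain_estimate_def)

locale prob_vector =
  fixes K :: nat and p :: "nat \<Rightarrow> real"
  assumes pos: "\<And>i. i < K \<Longrightarrow> 0 < p i" and sum_eq_1: "(\<Sum>i<K. p i) = 1"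
begin

lemma pair_expectation_fst: "pair_expectation K p (\<lambda>a b. f a) = (\<Sum>a<K. p a * f a)"
proof -
  have "pair_expectation K p (\<lambda>a b. f a) = (\<Sum>a<K. p a * f a * (\<Sum>b<K. p b))"
    unfolding pair_expectation_def by (simp add: sum_distrib_left ac_simps)
  then show ?thesis by (simp add: sum_eq_1)
qed

lemma pair_expectation_snd: "pair_expectation K p (\<lambda>a b. f b) = (\<Sum>b<K. p b * f b)"
proof -
  have "pair_expectation K p (\<lambda>a b. f b) = (\<Sum>a<K. p a) * (\<Sum>b<K. p b * f b)"
    unfolding pair_expectation_def by (simp add: sum_product mult.assoc)
  then show ?thesis by (simp add: sum_eq_1)
qed

lemma pair_expectation_const: "pair_expectation K p (\<lambda>a b. c) = c"
  using pair_expectation_fst[of "\<lambda>_. c"] by (simp add: sum_eq_1 flip: sum_distrib_right)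

lemma pair_expectation_mono:
  assumes "\<And>a b. a < K \<Longrightarrow> b < K \<Longrightarrow> f a b \<le> g a b"
  shows "pair_expectation K p f \<le> pair_expectation K p g"
  unfolding pair_expectation_def using assms pos
  by (intro sum_mono mult_left_mono) (auto intro: less_imp_le)

lemma pair_expectation_if_fst:
  assumes "i < K"
  shows "pair_expectation K p (\<lambda>a b. if a = i then h b else 0) = p i * (\<Sum>b<K. p b * h b)"
proof -
  have "(\<Sum>b<K. p a * p b * (if a = i then h b else 0))
      = (if a = i then p i * (\<Sum>b<K. p b * h b) else 0)" for a
    by (simp add: sum_distrib_left mult.assoc)
  then show ?thesis using assms unfolding pair_expectation_def by simp
qed

lemma pair_expectation_if_snd:
  assumes "i < K"
  shows "pair_expectation K p (\<lambda>a b. if b = i then h a else 0) = p i * (\<Sum>a<K. p a * h a)"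
  using assms unfolding pair_expectation_def
  by (simp add: sum_distrib_left sum_distrib_right ac_simps if_distrib[of "\<lambda>u. _ * u"] cong: if_cong)

lemma pair_expectation_gain_estimate:
  assumes "i < K"
  shows "pair_expectation K p (\<lambda>a b. gain_estimate p y a b i) = y i - (\<Sum>b<K. p b * y b)"
proof -
  have "pair_expectation K p (\<lambda>a b. gain_estimate p y a b i)
      = p i * (\<Sum>b<K. p b * ((y i - y b) / (2 * p i)))
        - p i * (\<Sum>a<K. p a * ((y a - y i) / (2 * p i)))"
    by (simp only: gain_estimate_eq_if pair_expectation_diff
        pair_expectation_if_fst[OF assms] pair_expectation_if_snd[OF assms])
  also have "\<dots> = (\<Sum>b<K. p b * y i - p b * y b)"
    using pos[OF assms]
    by (simp add: sum_distrib_left sum_subtractf field_simps flip: sum_divide_distrib)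
  also have "\<dots> = y i - (\<Sum>b<K. p b * y b)"
    by (simp add: sum_subtractf sum_eq_1 flip: sum_distrib_right)
  finally show ?thesis .
qed

lemma pair_expectation_gain_estimate_sq:
  assumes "i < K" and y: "\<And>j. j < K \<Longrightarrow> 0 \<le> y j \<and> y j \<le> 1"
  shows "p i * pair_expectation K p (\<lambda>a b. (gain_estimate p y a b i)\<^sup>2)
           \<le> (y i + (\<Sum>b<K. p b * y b)) / 2"
proof -
  have "p i * pair_expectation K p (\<lambda>a b. (gain_estimate p y a b i)\<^sup>2)
      = p i * (p i * (\<Sum>b<K. p b * ((y i - y b) / (2 * p i))\<^sup>2)
               + p i * (\<Sum>a<K. p a * ((y a - y i) / (2 * p i))\<^sup>2))"
    by (simp only: gain_estimate_sq_eq_if pair_expectation_add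
        pair_expectation_if_fst[OF assms(1)] pair_expectation_if_snd[OF assms(1)])
  also have "\<dots> = (\<Sum>b<K. p b * (y i - y b)\<^sup>2) / 2"
    using pos[OF assms(1)]
    by (simp add: sum_distrib_left power2_eq_square field_simps flip: sum_divide_distrib)
  also have "\<dots> \<le> (\<Sum>b<K. p b * (y i + y b)) / 2"
    using assms pos by (intro divide_right_mono sum_mono mult_left_mono square_diff_le_add)
      (auto intro: less_imp_le)
  also have "\<dots> = (y i + (\<Sum>b<K. p b * y b)) / 2"
    by (simp add: distrib_left sum.distrib sum_eq_1 flip: sum_distrib_right)
  finally show ?thesis .
qed

lemma abs_scaled_gain_estimate_le:
  assumes "a < K" "b < K" "0 \<le> \<eta>" "\<eta> \<le> p a" "\<eta> \<le> p b" "\<bar>y a - y b\<bar> \<le> 1"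
  shows "\<bar>\<eta> * gain_estimate p y a b i\<bar> \<le> 1/2"
proof -
  have "\<bar>\<eta> * ((y a - y b) / (2 * p c))\<bar> \<le> 1/2" if "c < K" "\<eta> \<le> p c" for c
  proof -
    have "0 < p c" using pos that by simp
    have "\<bar>\<eta> * ((y a - y b) / (2 * p c))\<bar> = \<eta> * \<bar>y a - y b\<bar> / (2 * p c)"
      using \<open>0 < p c\<close> \<open>0 \<le> \<eta>\<close> by (simp add: abs_mult)
    also have "\<dots> \<le> p c / (2 * p c)"
      using mult_left_le[OF assms(6,3)] that \<open>0 < p c\<close> by (intro divide_right_mono) auto
    also have "\<dots> = 1/2" using \<open>0 < p c\<close> by simp
    finally show ?thesis .
  qed
  then show ?thesis using assms by (auto simp: gain_estimate_def)
qed

lemma pmf_embed_pmf_vector: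
  "pmf (embed_pmf (\<lambda>i. if i < K then p i else 0)) i = (if i < K then p i else 0)"
proof (rule pmf_embed_pmf)
  show "0 \<le> (if i < K then p i else 0)" for i using pos by (simp add: less_imp_le)
  have "(\<integral>\<^sup>+i. ennreal (if i < K then p i else 0) \<partial>count_space UNIV)
      = (\<Sum>i<K. ennreal (p i))"
    by (subst nn_integral_count_space'[of "{..<K}"]) auto
  also have "\<dots> = 1" using pos sum_eq_1 by (subst sum_ennreal) (auto intro: less_imp_le)
  finally show "(\<integral>\<^sup>+i. ennreal (if i < K then p i else 0) \<partial>count_space UNIV) = 1" .
qed

lemma set_pmf_embed_pmf_vector: "set_pmf (embed_pmf (\<lambda>i. if i < K then p i else 0)) \<subseteq> {..<K}"
  by (auto simp: set_pmf_iff pmf_embed_pmf_vector split: if_splits)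

lemma expectation_embed_pmf_vector_pair:
  defines "M \<equiv> embed_pmf (\<lambda>i. if i < K then p i else 0)"
  shows "measure_pmf.expectation (bind_pmf M (\<lambda>a. bind_pmf M (\<lambda>b. return_pmf (F a b)))) h
           = pair_expectation K p (\<lambda>a b. h (F a b))"
proof -
  have fin: "finite (set_pmf M)" and sub: "set_pmf M \<subseteq> {..<K}"
    unfolding M_def using set_pmf_embed_pmf_vector by (auto intro: finite_subset)
  have pmf_M: "pmf M i = (if i < K then p i else 0)" for i
    unfolding M_def by (rule pmf_embed_pmf_vector)
  have inner: "measure_pmf.expectation (bind_pmf M (\<lambda>b. return_pmf (F a b))) h
      = (\<Sum>b<K. p b * h (F a b))" for a
    by (subst pmf_expectation_bind[of "{..<K}"]) (use fin sub in \<open>auto simp: pmf_M\<close>)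
  show ?thesis
    by (subst pmf_expectation_bind[of "{..<K}"])
      (use fin sub in \<open>auto simp: inner pmf_M pair_expectation_def sum_distrib_left mult.assoc\<close>)
qed

end

lemma rex3_prob_vector:
  assumes "0 < K" "0 \<le> \<gamma>" "\<gamma> < 1" "\<And>i. i < K \<Longrightarrow> 0 < w i"
  shows "prob_vector K (rex3_prob \<gamma> K w)"
proof
  have "0 < (\<Sum>j<K. w j)" using assms by (intro sum_pos) auto
  then show "0 < rex3_prob \<gamma> K w i" if "i < K" for i
    using assms that unfolding rex3_prob_def
    by (intro add_pos_nonneg divide_pos_pos mult_pos_pos) auto
  have "(\<Sum>i<K. rex3_prob \<gamma> K w i) = (1 - \<gamma>) * (\<Sum>i<K. w i) / (\<Sum>j<K. w j) + K * (\<gamma> / K)"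
    by (simp add: rex3_prob_def sum.distrib sum_distrib_left sum_divide_distrib)
  then show "(\<Sum>i<K. rex3_prob \<gamma> K w i) = 1"
    using \<open>0 < (\<Sum>j<K. w j)\<close> \<open>0 < K\<close> by simp
qed

lemma rex3_prob_ge:
  assumes "\<gamma> \<le> 1" "\<And>i. i < K \<Longrightarrow> 0 < w i" "i < K"
  shows "\<gamma> / K \<le> rex3_prob \<gamma> K w i"
  using assms sum_nonneg[of "{..<K}" w] unfolding rex3_prob_def
  by (simp add: less_imp_le)

lemma rex3_weight_share:
  assumes "\<gamma> \<noteq> 1"
  shows "w i / (\<Sum>j<K. w j) = (rex3_prob \<gamma> K w i - \<gamma> / K) / (1 - \<gamma>)"
proof -
  have "rex3_prob \<gamma> K w i - \<gamma> / K = (1 - \<gamma>) * (w i / (\<Sum>j<K. w j))"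
    by (simp add: rex3_prob_def)
  then show ?thesis using assms by simp
qed

lemma rex3_update_id_eq:
  "rex3_update (\<lambda>z. z) \<gamma> K x t w a b i
     = w i * exp (\<gamma> / K * gain_estimate (rex3_prob \<gamma> K w) (x t) a b i)"
  by (cases "a = b"; cases "i = a"; cases "i = b") (auto simp: rex3_update_def gain_estimate_def Let_def)

lemma rex3_update_pos: "0 < w i \<Longrightarrow> 0 < rex3_update \<psi> \<gamma> K x t w a b i"
  by (auto simp: rex3_update_def Let_def)

definition rex3_round ::
  "(real \<Rightarrow> real) \<Rightarrow> real \<Rightarrow> nat \<Rightarrow> (nat \<Rightarrow> nat \<Rightarrow> real) \<Rightarrow> nat \<Rightarrow> (nat \<Rightarrow> real) \<times> real
     \<Rightarrow> ((nat \<Rightarrow> real) \<times> real) pmf" where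
  "rex3_round \<psi> \<gamma> K x t s =
     bind_pmf (rex3_arm \<gamma> K (fst s)) (\<lambda>a. bind_pmf (rex3_arm \<gamma> K (fst s)) (\<lambda>b.
       return_pmf (rex3_update \<psi> \<gamma> K x t (fst s) a b, snd s + (x t a + x t b) / 2)))"

lemma rex3_run_Suc:
  "rex3_run \<psi> \<gamma> K x (Suc t) = bind_pmf (rex3_run \<psi> \<gamma> K x t) (rex3_round \<psi> \<gamma> K x (Suc t))"
  by (simp add: rex3_round_def[abs_def] case_prod_unfold)

lemma rex3_run_weights_pos: "s \<in> set_pmf (rex3_run \<psi> \<gamma> K x t) \<Longrightarrow> i < K \<Longrightarrow> 0 < fst s i"
proof (induction t arbitrary: s)
  case 0
  then show ?case by simp
next
  case (Suc t)
  then show ?case by (auto simp: rex3_run_Suc rex3_round_def rex3_update_pos)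
qed

lemma finite_set_pmf_rex3_arm:
  assumes "0 < K" "0 \<le> \<gamma>" "\<gamma> < 1" "\<And>i. i < K \<Longrightarrow> 0 < w i"
  shows "finite (set_pmf (rex3_arm \<gamma> K w))"
proof -
  interpret prob_vector K "rex3_prob \<gamma> K w" using rex3_prob_vector[OF assms] .
  show ?thesis unfolding rex3_arm_def by (rule finite_subset[OF set_pmf_embed_pmf_vector]) simp
qed

lemma finite_set_pmf_rex3_round:
  assumes "0 < K" "0 \<le> \<gamma>" "\<gamma> < 1" "\<And>i. i < K \<Longrightarrow> 0 < fst s i"
  shows "finite (set_pmf (rex3_round \<psi> \<gamma> K x t s))"
  using finite_set_pmf_rex3_arm[OF assms] by (simp add: rex3_round_def)

lemma finite_set_pmf_rex3_run:
  assumes "0 < K" "0 \<le> \<gamma>" "\<gamma> < 1"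
  shows "finite (set_pmf (rex3_run \<psi> \<gamma> K x t))"
proof (induction t)
  case 0
  then show ?case by simp
next
  case (Suc t)
  then show ?case
    unfolding rex3_run_Suc set_bind_pmf
    by (intro finite_UN_I finite_set_pmf_rex3_round[OF assms] rex3_run_weights_pos)
qed

text \<open>The coefficient of the gain is chosen so that the expected gain of the round cancels
  against the second-order terms of the weight update.\<close>
definition rex3_potential :: "real \<Rightarrow> nat \<Rightarrow> nat \<Rightarrow> (nat \<Rightarrow> real) \<times> real \<Rightarrow> real" where
  "rex3_potential \<gamma> K j s =
     ln (\<Sum>i<K. fst s i) - ln (fst s j) - (\<gamma> / K + 3 * \<gamma>\<^sup>2 / (2 * real K * (1 - \<gamma>))) * snd s"

context
  fixes \<gamma> :: real and K :: nat and w :: "nat \<Rightarrow> real" and x :: "nat \<Rightarrow> nat \<Rightarrow> real" and t :: nat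
  assumes K: "0 < K" and \<gamma>: "0 < \<gamma>" "\<gamma> < 1" and w: "\<And>i. i < K \<Longrightarrow> 0 < w i"
    and x: "\<And>i. i < K \<Longrightarrow> 0 \<le> x t i \<and> x t i \<le> 1"
begin

interpretation prob_vector K "rex3_prob \<gamma> K w"
  using rex3_prob_vector K \<gamma> w by simp

abbreviation (input) W where "W \<equiv> \<Sum>j<K. w j"
abbreviation (input) est where "est \<equiv> gain_estimate (rex3_prob \<gamma> K w) (x t)"
abbreviation (input) mean_reward where "mean_reward \<equiv> \<Sum>b<K. rex3_prob \<gamma> K w b * x t b"

lemma total_weight_pos: "0 < W"
  using K w by (intro sum_pos) auto

lemma ln_total_weight_update_le:
  assumes "a < K" "b < K"
  shows "ln (\<Sum>i<K. rex3_update (\<lambda>z. z) \<gamma> K x t w a b i)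
           \<le> ln W + (\<Sum>i<K. \<gamma> / K * (w i / W) * est a b i)
              + (\<Sum>i<K. (\<gamma> / K)\<^sup>2 * (w i / W) * (est a b i)\<^sup>2)"
proof -
  have small: "\<gamma> / K * est a b i \<le> 1" for i
  proof -
    have "\<bar>\<gamma> / K * est a b i\<bar> \<le> 1/2"
      using assms x[of a] x[of b] \<gamma> rex3_prob_ge[OF _ w]
      by (intro abs_scaled_gain_estimate_le) auto
    then show ?thesis using abs_ge_self[of "\<gamma> / K * est a b i"] by linarith
  qed
  have "ln (\<Sum>i<K. rex3_update (\<lambda>z. z) \<gamma> K x t w a b i)
      \<le> ln W + (\<Sum>i<K. w i * (\<gamma> / K * est a b i + (\<gamma> / K * est a b i)\<^sup>2)) / W"
    unfolding rex3_update_id_eq using K w small by (intro ln_sum_mult_exp_le) auto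
  also have "\<dots> = ln W + (\<Sum>i<K. \<gamma> / K * (w i / W) * est a b i)
              + (\<Sum>i<K. (\<gamma> / K)\<^sup>2 * (w i / W) * (est a b i)\<^sup>2)"
    unfolding sum_divide_distrib add.assoc sum.distrib[symmetric]
    using total_weight_pos K
    by (intro arg_cong2[where f = "(+)"] refl sum.cong) (simp add: power2_eq_square field_simps)
  finally show ?thesis .
qed

lemma sum_weight_share_mult_gain:
  "(\<Sum>i<K. w i / W * (x t i - mean_reward)) = \<gamma> * (mean_reward - (\<Sum>i<K. x t i) / K) / (1 - \<gamma>)"
proof -
  have expand: "(\<Sum>i<K. (rex3_prob \<gamma> K w i - \<gamma> / K) * (x t i - m))
      = mean_reward - m * (\<Sum>i<K. rex3_prob \<gamma> K w i) - \<gamma> / K * (\<Sum>i<K. x t i) + K * (\<gamma> / K) * m"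
    for m
    by (simp add: algebra_simps sum_subtractf sum.distrib sum_distrib_left)
  have "(\<Sum>i<K. w i / W * (x t i - mean_reward))
      = (\<Sum>i<K. (rex3_prob \<gamma> K w i - \<gamma> / K) * (x t i - mean_reward)) / (1 - \<gamma>)"
    by (simp only: rex3_weight_share[OF less_imp_neq[OF \<gamma>(2)]]) (simp add: sum_divide_distrib)
  also have "(\<Sum>i<K. (rex3_prob \<gamma> K w i - \<gamma> / K) * (x t i - mean_reward))
      = \<gamma> * (mean_reward - (\<Sum>i<K. x t i) / K)"
    using expand[of mean_reward] K by (simp add: sum_eq_1 algebra_simps)
  finally show ?thesis .
qed

lemma weight_share_mult_second_moment_le:
  assumes "i < K"
  shows "w i / W * pair_expectation K (rex3_prob \<gamma> K w) (\<lambda>a b. (est a b i)\<^sup>2)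
           \<le> (x t i + mean_reward) / (2 * (1 - \<gamma>))"
proof -
  have "0 \<le> pair_expectation K (rex3_prob \<gamma> K w) (\<lambda>a b. (est a b i)\<^sup>2)"
    using pair_expectation_mono[of "\<lambda>a b. 0"] by (simp add: pair_expectation_const)
  moreover have "w i / W \<le> rex3_prob \<gamma> K w i / (1 - \<gamma>)"
    unfolding rex3_weight_share[OF less_imp_neq[OF \<gamma>(2)]] using \<gamma> K by (intro divide_right_mono) auto
  ultimately have "w i / W * pair_expectation K (rex3_prob \<gamma> K w) (\<lambda>a b. (est a b i)\<^sup>2)
      \<le> rex3_prob \<gamma> K w i * pair_expectation K (rex3_prob \<gamma> K w) (\<lambda>a b. (est a b i)\<^sup>2) / (1 - \<gamma>)"
    using mult_right_mono by fastforce
  also have "\<dots> \<le> ((x t i + mean_reward) / 2) / (1 - \<gamma>)"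
    using \<gamma> assms x by (intro divide_right_mono pair_expectation_gain_estimate_sq) auto
  finally show ?thesis by simp
qed

lemma expected_ln_total_weight_update_le:
  "pair_expectation K (rex3_prob \<gamma> K w) (\<lambda>a b. ln (\<Sum>i<K. rex3_update (\<lambda>z. z) \<gamma> K x t w a b i))
     \<le> ln W + \<gamma> / K * (\<gamma> * (mean_reward - (\<Sum>i<K. x t i) / K) / (1 - \<gamma>))
        + (\<gamma> / K)\<^sup>2 / (1 - \<gamma>) * ((\<Sum>i<K. x t i) + K * mean_reward) / 2"
proof -
  have sum_mean: "(\<Sum>i<K. c * ((x t i + m) / (2 * d))) = c / d * ((\<Sum>i<K. x t i) + K * m) / 2"
    for c d m :: real
    by (simp add: sum.distrib sum_divide_distrib[symmetric] sum_distrib_left[symmetric])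
  have "pair_expectation K (rex3_prob \<gamma> K w) (\<lambda>a b. ln (\<Sum>i<K. rex3_update (\<lambda>z. z) \<gamma> K x t w a b i))
      \<le> pair_expectation K (rex3_prob \<gamma> K w) (\<lambda>a b. ln W + (\<Sum>i<K. \<gamma> / K * (w i / W) * est a b i)
              + (\<Sum>i<K. (\<gamma> / K)\<^sup>2 * (w i / W) * (est a b i)\<^sup>2))"
    by (intro pair_expectation_mono ln_total_weight_update_le)
  also have "\<dots> = ln W
      + (\<Sum>i<K. \<gamma> / K * (w i / W) * pair_expectation K (rex3_prob \<gamma> K w) (\<lambda>a b. est a b i))
      + (\<Sum>i<K. (\<gamma> / K)\<^sup>2 * (w i / W) * pair_expectation K (rex3_prob \<gamma> K w) (\<lambda>a b. (est a b i)\<^sup>2))"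
    by (simp only: pair_expectation_add pair_expectation_sum pair_expectation_cmult pair_expectation_const)
  also have "(\<Sum>i<K. \<gamma> / K * (w i / W) * pair_expectation K (rex3_prob \<gamma> K w) (\<lambda>a b. est a b i))
      = \<gamma> / K * (\<Sum>i<K. w i / W * (x t i - mean_reward))"
    by (simp add: pair_expectation_gain_estimate sum_distrib_left mult.assoc)
  also have "\<dots> = \<gamma> / K * (\<gamma> * (mean_reward - (\<Sum>i<K. x t i) / K) / (1 - \<gamma>))"
    by (simp only: sum_weight_share_mult_gain)
  also have "(\<Sum>i<K. (\<gamma> / K)\<^sup>2 * (w i / W) * pair_expectation K (rex3_prob \<gamma> K w) (\<lambda>a b. (est a b i)\<^sup>2))
      \<le> (\<Sum>i<K. (\<gamma> / K)\<^sup>2 * ((x t i + mean_reward) / (2 * (1 - \<gamma>))))"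
  proof (rule sum_mono)
    fix i assume "i \<in> {..<K}"
    from mult_left_mono[OF weight_share_mult_second_moment_le zero_le_power2] this
    show "(\<gamma> / K)\<^sup>2 * (w i / W) * pair_expectation K (rex3_prob \<gamma> K w) (\<lambda>a b. (est a b i)\<^sup>2)
        \<le> (\<gamma> / K)\<^sup>2 * ((x t i + mean_reward) / (2 * (1 - \<gamma>)))"
      by (simp only: mult.assoc lessThan_iff)
  qed
  also have "\<dots> = (\<gamma> / K)\<^sup>2 / (1 - \<gamma>) * ((\<Sum>i<K. x t i) + K * mean_reward) / 2"
    by (rule sum_mean)
  finally show ?thesis by simp
qed

lemma expected_ln_weight_update:
  assumes "j < K"
  shows "pair_expectation K (rex3_prob \<gamma> K w) (\<lambda>a b. ln (rex3_update (\<lambda>z. z) \<gamma> K x t w a b j))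
           = ln (w j) + \<gamma> / K * (x t j - mean_reward)"
proof -
  have "ln (rex3_update (\<lambda>z. z) \<gamma> K x t w a b j) = ln (w j) + \<gamma> / K * est a b j" for a b
    using w[OF assms] by (simp add: rex3_update_id_eq ln_mult)
  then show ?thesis
    by (simp only: pair_expectation_add pair_expectation_cmult pair_expectation_const
        pair_expectation_gain_estimate[OF assms])
qed

lemma expected_round_gain: "pair_expectation K (rex3_prob \<gamma> K w) (\<lambda>a b. (x t a + x t b) / 2) = mean_reward"
  by (simp add: add_divide_distrib pair_expectation_add pair_expectation_fst pair_expectation_snd
      flip: sum_divide_distrib)

lemma expected_rex3_potential_round_le:
  assumes "j < K"
  shows "measure_pmf.expectation (rex3_round (\<lambda>z. z) \<gamma> K x t (w, g)) (rex3_potential \<gamma> K j)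
           \<le> rex3_potential \<gamma> K j (w, g) - \<gamma> / K * x t j
              - \<gamma>\<^sup>2 / (2 * (real K)\<^sup>2 * (1 - \<gamma>)) * (\<Sum>i<K. x t i)"
proof -
  define c where "c = \<gamma> / K + 3 * \<gamma>\<^sup>2 / (2 * real K * (1 - \<gamma>))"
  have cancel: "(L + \<gamma> / K * (\<gamma> * (m - X / K) / (1 - \<gamma>)) + (\<gamma> / K)\<^sup>2 / (1 - \<gamma>) * (X + K * m) / 2)
      - (L' + \<gamma> / K * (y - m)) - c * (g + m)
      = L - L' - c * g - \<gamma> / K * y - \<gamma>\<^sup>2 / (2 * (real K)\<^sup>2 * (1 - \<gamma>)) * X" for L L' m X y :: real
    using K \<gamma> unfolding c_def
    by (simp add: divide_simps power2_eq_square) (simp add: algebra_simps)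
  have "measure_pmf.expectation (rex3_round (\<lambda>z. z) \<gamma> K x t (w, g)) (rex3_potential \<gamma> K j)
      = pair_expectation K (rex3_prob \<gamma> K w)
          (\<lambda>a b. rex3_potential \<gamma> K j (rex3_update (\<lambda>z. z) \<gamma> K x t w a b, g + (x t a + x t b) / 2))"
    unfolding rex3_round_def rex3_arm_def fst_conv snd_conv by (rule expectation_embed_pmf_vector_pair)
  also have "\<dots> = pair_expectation K (rex3_prob \<gamma> K w)
          (\<lambda>a b. ln (\<Sum>i<K. rex3_update (\<lambda>z. z) \<gamma> K x t w a b i))
      - pair_expectation K (rex3_prob \<gamma> K w) (\<lambda>a b. ln (rex3_update (\<lambda>z. z) \<gamma> K x t w a b j))
      - c * (g + pair_expectation K (rex3_prob \<gamma> K w) (\<lambda>a b. (x t a + x t b) / 2))"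
    unfolding rex3_potential_def c_def fst_conv snd_conv
    by (simp only: pair_expectation_diff pair_expectation_cmult pair_expectation_add pair_expectation_const)
  also have "\<dots> \<le> (ln W + \<gamma> / K * (\<gamma> * (mean_reward - (\<Sum>i<K. x t i) / K) / (1 - \<gamma>))
        + (\<gamma> / K)\<^sup>2 / (1 - \<gamma>) * ((\<Sum>i<K. x t i) + K * mean_reward) / 2)
      - (ln (w j) + \<gamma> / K * (x t j - mean_reward)) - c * (g + mean_reward)"
    unfolding expected_ln_weight_update[OF assms] expected_round_gain
    using expected_ln_total_weight_update_le by simp
  also have "\<dots> = rex3_potential \<gamma> K j (w, g) - \<gamma> / K * x t j
      - \<gamma>\<^sup>2 / (2 * (real K)\<^sup>2 * (1 - \<gamma>)) * (\<Sum>i<K. x t i)"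
    by (simp only: cancel) (simp add: rex3_potential_def c_def)
  finally show ?thesis .
qed

end

lemma expected_rex3_potential_le:
  assumes "0 < K" "0 < \<gamma>" "\<gamma> < 1" "j < K"
    and x: "\<And>s i. s \<in> {1..T} \<Longrightarrow> i < K \<Longrightarrow> 0 \<le> x s i \<and> x s i \<le> 1" and "t \<le> T"
  shows "measure_pmf.expectation (rex3_run (\<lambda>z. z) \<gamma> K x t) (rex3_potential \<gamma> K j)
           \<le> ln K - (\<Sum>s=1..t. \<gamma> / K * x s j + \<gamma>\<^sup>2 / (2 * (real K)\<^sup>2 * (1 - \<gamma>)) * (\<Sum>i<K. x s i))"
  using \<open>t \<le> T\<close>
proof (induction t)
  case 0
  then show ?case by (simp add: rex3_potential_def)
next
  case (Suc t)
  define R where "R = rex3_run (\<lambda>z. z) \<gamma> K x t"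
  define \<delta> where "\<delta> = \<gamma> / K * x (Suc t) j + \<gamma>\<^sup>2 / (2 * (real K)\<^sup>2 * (1 - \<gamma>)) * (\<Sum>i<K. x (Suc t) i)"
  have fin: "finite (set_pmf R)"
    unfolding R_def using assms by (intro finite_set_pmf_rex3_run) auto
  have "measure_pmf.expectation (rex3_run (\<lambda>z. z) \<gamma> K x (Suc t)) (rex3_potential \<gamma> K j)
      \<le> measure_pmf.expectation R (\<lambda>s. rex3_potential \<gamma> K j s - \<delta>)"
    unfolding rex3_run_Suc R_def[symmetric]
  proof (rule expectation_bind_pmf_le[OF fin])
    fix s assume s: "s \<in> set_pmf R"
    then have pos: "\<And>i. i < K \<Longrightarrow> 0 < fst s i"
      unfolding R_def by (rule rex3_run_weights_pos)
    then show "finite (set_pmf (rex3_round (\<lambda>z. z) \<gamma> K x (Suc t) s))"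
      using assms by (intro finite_set_pmf_rex3_round) auto
    show "measure_pmf.expectation (rex3_round (\<lambda>z. z) \<gamma> K x (Suc t) s) (rex3_potential \<gamma> K j)
        \<le> rex3_potential \<gamma> K j s - \<delta>"
      using expected_rex3_potential_round_le[of K \<gamma> "fst s" x "Suc t" j "snd s"] assms pos Suc.prems
      unfolding \<delta>_def by simp
  qed
  also have "\<dots> = measure_pmf.expectation R (rex3_potential \<gamma> K j) - \<delta>"
    using fin by (simp add: integrable_measure_pmf_finite)
  also have "\<dots> \<le> ln K - (\<Sum>s=1..Suc t. \<gamma> / K * x s j + \<gamma>\<^sup>2 / (2 * (real K)\<^sup>2 * (1 - \<gamma>)) * (\<Sum>i<K. x s i))"
    using Suc unfolding R_def \<delta>_def by simp
  finally show ?case .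
qed

lemma rex3_potential_ge:
  assumes "\<And>i. i < K \<Longrightarrow> 0 < fst s i" "j < K"
  shows "- (\<gamma> / K + 3 * \<gamma>\<^sup>2 / (2 * real K * (1 - \<gamma>))) * snd s \<le> rex3_potential \<gamma> K j s"
proof -
  have "fst s j \<le> (\<Sum>i<K. fst s i)"
    using assms by (intro member_le_sum) (auto intro: less_imp_le)
  moreover have "0 < fst s j" using assms by simp
  ultimately have "ln (fst s j) \<le> ln (\<Sum>i<K. fst s i)" by simp
  then show ?thesis unfolding rex3_potential_def by (simp add: algebra_simps)
qed

lemma rex3_gain_bound:
  assumes "0 < K" "0 < \<gamma>" "\<gamma> < 1" "j < K"
    and x: "\<And>t i. t \<in> {1..T} \<Longrightarrow> i < K \<Longrightarrow> 0 \<le> x t i \<and> x t i \<le> 1"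
  shows "\<gamma> / K * (\<Sum>t=1..T. x t j) + \<gamma>\<^sup>2 / (2 * real K * (1 - \<gamma>)) * EG_unif K x T
           \<le> ln K + (\<gamma> / K + 3 * \<gamma>\<^sup>2 / (2 * real K * (1 - \<gamma>))) * EG_alg (\<lambda>z. z) \<gamma> K x T"
proof -
  define R where "R = rex3_run (\<lambda>z. z) \<gamma> K x T"
  define c where "c = \<gamma> / K + 3 * \<gamma>\<^sup>2 / (2 * real K * (1 - \<gamma>))"
  have fin: "finite (set_pmf R)"
    unfolding R_def using assms by (intro finite_set_pmf_rex3_run) auto
  have "- c * EG_alg (\<lambda>z. z) \<gamma> K x T = measure_pmf.expectation R (\<lambda>s. - c * snd s)"
    unfolding EG_alg_def R_def by simp
  also have "\<dots> \<le> measure_pmf.expectation R (rex3_potential \<gamma> K j)"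
    using fin rex3_run_weights_pos rex3_potential_ge \<open>j < K\<close> unfolding R_def c_def
    by (intro integral_mono_AE) (auto simp: integrable_measure_pmf_finite AE_measure_pmf_iff)
  also have "\<dots> \<le> ln K - (\<Sum>t=1..T. \<gamma> / K * x t j + \<gamma>\<^sup>2 / (2 * (real K)\<^sup>2 * (1 - \<gamma>)) * (\<Sum>i<K. x t i))"
    unfolding R_def by (rule expected_rex3_potential_le[OF assms(1-4) x order.refl])
  also have "\<dots> = ln K - (\<gamma> / K * (\<Sum>t=1..T. x t j)
      + \<gamma>\<^sup>2 / (2 * (real K)\<^sup>2 * (1 - \<gamma>)) * (\<Sum>t=1..T. \<Sum>i<K. x t i))"
    by (simp add: sum.distrib sum_distrib_left)
  also have "\<dots> = ln K - (\<gamma> / K * (\<Sum>t=1..T. x t j) + \<gamma>\<^sup>2 / (2 * real K * (1 - \<gamma>)) * EG_unif K x T)"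
    using \<open>0 < K\<close> unfolding EG_unif_def by (simp add: power2_eq_square)
  finally show ?thesis
    by (simp only: c_def[symmetric] mult_minus_left)
qed

lemma rex3_regret_bound:
  assumes "0 < K" "0 < \<gamma>" "\<gamma> < 1" "j < K"
    and x: "\<And>t i. t \<in> {1..T} \<Longrightarrow> i < K \<Longrightarrow> 0 \<le> x t i \<and> x t i \<le> 1"
  shows "(1 - \<gamma>) * ((\<Sum>t=1..T. x t j) - EG_alg (\<lambda>z. z) \<gamma> K x T)
           \<le> (1 - \<gamma>) * (K * ln K / \<gamma>) + \<gamma> / 2 * (3 * EG_alg (\<lambda>z. z) \<gamma> K x T - EG_unif K x T)"
proof -
  define G where "G = (\<Sum>t=1..T. x t j)"
  define E where "E = EG_alg (\<lambda>z. z) \<gamma> K x T"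
  define U where "U = EG_unif K x T"
  define M where "M = K * (1 - \<gamma>) / \<gamma>"
  have "0 \<le> M" using assms by (simp add: M_def)
  have "(1 - \<gamma>) * G + \<gamma> / 2 * U = M * (\<gamma> / K * G + \<gamma>\<^sup>2 / (2 * real K * (1 - \<gamma>)) * U)"
    using assms by (simp add: M_def field_simps power2_eq_square)
  also have "\<dots> \<le> M * (ln K + (\<gamma> / K + 3 * \<gamma>\<^sup>2 / (2 * real K * (1 - \<gamma>))) * E)"
    using rex3_gain_bound[OF assms] \<open>0 \<le> M\<close> unfolding G_def U_def E_def by (rule mult_left_mono)
  also have "\<dots> = (1 - \<gamma>) * (K * ln K / \<gamma>) + (1 + \<gamma> / 2) * E"
    using assms by (simp add: M_def field_simps power2_eq_square)
  finally show ?thesis unfolding G_def[symmetric] E_def[symmetric] U_def[symmetric]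
    by (simp add: algebra_simps)
qed

lemma regret_bound_arithmetic:
  fixes \<gamma> G E U m P :: real
  assumes "0 < \<gamma>" "\<gamma> < 1" "0 \<le> P"
    and bound: "(1 - \<gamma>) * (G - E) \<le> (1 - \<gamma>) * P + \<gamma> / 2 * (3 * E - U)"
    and "E \<le> G" "m \<le> U" "0 \<le> m" "m \<le> G"
  shows "G - E \<le> P + \<gamma> * (exp 1 * G - (4 - exp 1) * m)"
proof -
  have e: "5/2 \<le> exp (1::real)" using exp_lower_Taylor_quadratic[of 1] by simp
  have "G - E = (1 - \<gamma>) * (G - E) + \<gamma> * (G - E)" by algebra
  also have "\<dots> \<le> (1 - \<gamma>) * P + \<gamma> * (G + E / 2 - U / 2)"
    using bound by (simp add: algebra_simps)
  also have "\<dots> \<le> P + \<gamma> * (3/2 * G - m / 2)"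
    using assms mult_nonneg_nonneg[of \<gamma> P] by (intro add_mono mult_left_mono) (auto simp: algebra_simps)
  also have "\<dots> \<le> P + \<gamma> * (exp 1 * G - (4 - exp 1) * m)"
  proof -
    have "(exp 1 * G - (4 - exp 1) * m) - (3/2 * G - m / 2)
        = (exp 1 - 3/2) * (G - m) + (2 * exp 1 - 5) * m"
      by (simp add: field_simps)
    also have "\<dots> \<ge> 0"
      using e assms by (intro add_nonneg_nonneg mult_nonneg_nonneg) auto
    finally show ?thesis using \<open>0 < \<gamma>\<close> by (intro add_left_mono mult_left_mono) auto
  qed
  finally show ?thesis .
qed

theorem corollary1:
  fixes K T :: nat and x :: "nat \<Rightarrow> nat \<Rightarrow> real" and \<gamma> :: real
  assumes "K \<ge> 2" and "T \<ge> 1"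
    and "\<And>t i. t \<in> {1..T} \<Longrightarrow> i < K \<Longrightarrow> 0 \<le> x t i \<and> x t i \<le> 1"
    and "0 < \<gamma>" and "\<gamma> < 1/2"
    and "EG_alg (\<lambda>z. z) \<gamma> K x T \<le> G_max K x T"
    and "EG_unif K x T \<ge> G_min K x T"
  shows "G_max K x T - EG_alg (\<lambda>z. z) \<gamma> K x T
           \<le> real K * ln (real K) / \<gamma>
              + \<gamma> * (exp 1 * G_max K x T - (4 - exp 1) * G_min K x T)"
proof -
  define gain where "gain i = (\<Sum>t=1..T. x t i)" for i
  have arms: "finite {..<K}" "{..<K} \<noteq> {}" using assms(1) by (auto simp: lessThan_empty_iff)
  have "G_max K x T \<in> gain ` {..<K}"
    unfolding G_max_def gain_def[symmetric] using arms by (intro Max_in) auto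
  then obtain j where j: "j < K" "G_max K x T = gain j" by auto
  have "G_min K x T \<in> gain ` {..<K}"
    unfolding G_min_def gain_def[symmetric] using arms by (intro Min_in) auto
  then obtain j' where j': "j' < K" "G_min K x T = gain j'" by auto
  have "G_min K x T \<le> G_max K x T"
    using j arms unfolding G_min_def gain_def[symmetric] by (intro Min_le) auto
  moreover have "0 \<le> G_min K x T"
    using j' assms(3) unfolding gain_def by (auto intro: sum_nonneg)
  moreover have "0 \<le> real K * ln (real K) / \<gamma>"
    using assms(1,4) by simp
  moreover have "(1 - \<gamma>) * (G_max K x T - EG_alg (\<lambda>z. z) \<gamma> K x T)
      \<le> (1 - \<gamma>) * (K * ln K / \<gamma>) + \<gamma> / 2 * (3 * EG_alg (\<lambda>z. z) \<gamma> K x T - EG_unif K x T)"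
    unfolding j(2) gain_def using assms j by (intro rex3_regret_bound) auto
  ultimately show ?thesis
    using assms by (intro regret_bound_arithmetic[where U = "EG_unif K x T"]) auto
qed

end
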